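(* Consider an execution of the ABC protocol under the standing assumptions, producing transaction DAG $G$, and fix a total order $<_{time}$ of the messages respecting references. Let $t_0$ be the first transaction (other than genesis) confirmed in $G$, i.e. one admitting a witnessing ack set $A_{t_0}$ whose $<_{time}$-maximal element is minimal among all witnessing ack sets of all confirmed transactions. Then for every confirmed transaction $t$ of $G$ (with witnessing ack set $A_t$), either $t_0\in\mathrm{past}(A_t)$ or $t\in\mathrm{past}(A_{t_0})$.
   Context: ABC is a cryptocurrency protocol. An output is a pair (value, owner public key). A transaction $t$ has inputs (outputs of earlier transactions, which $t$ spends), outputs with the same total value, and a validator public key; it is signed by its inputs' secret keys. The genesis is a special input-less transaction with outputs summing to $M$, confirmed from the start. An ack is a validator-signed message containing a reference to the previous ack of the same validator and references to transactions the validator signs. Messages reference only earlier messages, forming a DAG rooted at genesis. $\mathrm{past}(x)$ is the set of messages reachable from $x$ by following references; $\mathrm{past}(A)=\bigcup_{x\in A}\mathrm{past}(x)$. The stake delegated to validator $v$ in $\mathrm{past}(A)$ is the sum of values of outputs, unspent in $\mathrm{past}(A)$, of transactions confirmed in $\mathrm{past}(A)$ indicating $v$ as validator. A transaction $t$ is confirmed if transactions producing its inputs are confirmed and there is a set of acks $A_t$ (a witnessing ack set) such that validators signing $t$ in $A_t$ have total delegated stake in $\mathrm{past}(A_t)$ exceeding $\tfrac23 M$ and no other transaction in $\mathrm{past}(A_t)$ shares an input with $t$. Standing assumptions: honest validators always reference their own previous ack in each new ack and never sign two transactions sharing an input; honest agents never spend an output twice; the adversary behaves arbitrarily (may issue conflicting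 transactions, acks not referencing previous acks, etc.) and controls message delivery (messages are eventually delivered, with no timing bound); the stake delegated to the adversary is always less than $M/3$, where in particular the genesis outputs delegated to adversarial validators sum to less than $M/3$, and subsequently a transaction delegated to an honest validator reduces the adversary's count by the value of its adversary-delegated inputs when it is confirmed, while a transaction delegated to the adversary increases the count by the value of its honest-delegated inputs when it is issued. *)

theory Defs
  imports Complex_Main
begin

text \<open>An abstract model of an execution of the ABC protocol.
  Messages have type 'm, public keys have type 'k.  An output is identified
  by an outpoint (t, i): the i-th output of transaction t.\<close>

record ('m, 'k) abc =
  msgs    :: "'m set"
  is_ack  :: "'m \<Rightarrow> bool"
  ins     :: "'m \<Rightarrow> ('m \<times> nat) set"
  outs    :: "'m \<Rightarrow> (real \<times> 'k) list"   \<comment> \<open>outputs (value, owner key)\<close>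
  txval   :: "'m \<Rightarrow> 'k"
  gdeleg  :: "nat \<Rightarrow> 'k"               \<comment> \<open>validator of the i-th genesis output\<close>
  ackval  :: "'m \<Rightarrow> 'k"
  prev    :: "'m \<Rightarrow> 'm option"
  signs   :: "'m \<Rightarrow> 'm set"
  genesis :: "'m"
  honest  :: "'k \<Rightarrow> bool"
  tlt     :: "'m \<Rightarrow> 'm \<Rightarrow> bool"
  totalM  :: real

definition is_tx :: "('m,'k) abc \<Rightarrow> 'm \<Rightarrow> bool" where
  "is_tx E t \<longleftrightarrow> \<not> is_ack E t"

definition refs :: "('m,'k) abc \<Rightarrow> 'm \<Rightarrow> 'm set" where
  "refs E x = (if is_ack E x then set_option (prev E x) \<union> signs E x else fst ` ins E x)"

definition past1 :: "('m,'k) abc \<Rightarrow> 'm \<Rightarrow> 'm set" where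
  "past1 E x = {y. (x, y) \<in> {(u, w). w \<in> refs E u}\<^sup>*}"

definition past :: "('m,'k) abc \<Rightarrow> 'm set \<Rightarrow> 'm set" where
  "past E A = (\<Union>x\<in>A. past1 E x)"

definition oval :: "('m,'k) abc \<Rightarrow> 'm \<times> nat \<Rightarrow> real" where
  "oval E u = fst (outs E (fst u) ! snd u)"

definition owner :: "('m,'k) abc \<Rightarrow> 'm \<times> nat \<Rightarrow> 'k" where
  "owner E u = snd (outs E (fst u) ! snd u)"

definition deleg :: "('m,'k) abc \<Rightarrow> 'm \<times> nat \<Rightarrow> 'k" where
  "deleg E u = (if fst u = genesis E then gdeleg E (snd u) else txval E (fst u))"

definition unspent :: "('m,'k) abc \<Rightarrow> 'm set \<Rightarrow> 'm \<times> nat \<Rightarrow> bool" where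
  "unspent E X u \<longleftrightarrow> \<not> (\<exists>t'\<in>X. is_tx E t' \<and> u \<in> ins E t')"

text \<open>Stake delegated to v in X, given a notion C X t of "t confirmed in X".\<close>
definition stake_with ::
  "('m,'k) abc \<Rightarrow> ('m set \<Rightarrow> 'm \<Rightarrow> bool) \<Rightarrow> 'm set \<Rightarrow> 'k \<Rightarrow> real" where
  "stake_with E C X v =
     (\<Sum>u \<in> {u. fst u \<in> X \<and> fst u \<in> msgs E \<and> is_tx E (fst u) \<and> C X (fst u)
              \<and> snd u < length (outs E (fst u)) \<and> deleg E u = v \<and> unspent E X u}. oval E u)"

definition signers :: "('m,'k) abc \<Rightarrow> 'm \<Rightarrow> 'm set \<Rightarrow> 'k set" where
  "signers E t A = {ackval E a | a. a \<in> A \<and> t \<in> signs E a}"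

definition witness_with ::
  "('m,'k) abc \<Rightarrow> ('m set \<Rightarrow> 'm \<Rightarrow> bool) \<Rightarrow> 'm \<Rightarrow> 'm set \<Rightarrow> bool" where
  "witness_with E C t A \<longleftrightarrow>
     finite A \<and> (\<forall>a\<in>A. is_ack E a)
     \<and> (\<Sum>v\<in>signers E t A. stake_with E C (past E A) v) > 2/3 * totalM E
     \<and> (\<forall>t'\<in>past E A. is_tx E t' \<and> t' \<noteq> t \<longrightarrow> ins E t' \<inter> ins E t = {})"

definition conf_step ::
  "('m,'k) abc \<Rightarrow> ('m set \<Rightarrow> 'm \<Rightarrow> bool) \<Rightarrow> ('m set \<Rightarrow> 'm \<Rightarrow> bool)" where
  "conf_step E C = (\<lambda>D t. t = genesis E \<or>
      (is_tx E t \<and> (\<forall>u\<in>ins E t. C D (fst u)) \<and> (\<exists>A. A \<subseteq> D \<and> witness_with E C t A)))"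

definition conf :: "('m,'k) abc \<Rightarrow> 'm set \<Rightarrow> 'm \<Rightarrow> bool" where
  "conf E = lfp (conf_step E)"

definition witnessing :: "('m,'k) abc \<Rightarrow> 'm \<Rightarrow> 'm set \<Rightarrow> bool" where
  "witnessing E t A \<longleftrightarrow> witness_with E (conf E) t A"

definition tle :: "('m,'k) abc \<Rightarrow> 'm \<Rightarrow> 'm \<Rightarrow> bool" where
  "tle E x y \<longleftrightarrow> x = y \<or> tlt E x y"

definition prefix :: "('m,'k) abc \<Rightarrow> 'm \<Rightarrow> 'm set" where
  "prefix E \<tau> = {m \<in> msgs E. tle E m \<tau>}"

definition tmax :: "('m,'k) abc \<Rightarrow> 'm set \<Rightarrow> 'm" where
  "tmax E A = (THE m. m \<in> A \<and> (\<forall>a\<in>A. tle E a m))"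

definition genesis_adv :: "('m,'k) abc \<Rightarrow> real" where
  "genesis_adv E = (\<Sum>i | i < length (outs E (genesis E)) \<and> \<not> honest E (gdeleg E i).
                      oval E (genesis E, i))"

definition adv_count :: "('m,'k) abc \<Rightarrow> 'm \<Rightarrow> real" where
  "adv_count E \<tau> = genesis_adv E
     - (\<Sum>t | t \<in> msgs E \<and> is_tx E t \<and> t \<noteq> genesis E \<and> honest E (txval E t)
              \<and> conf E (prefix E \<tau>) t.
          \<Sum>u | u \<in> ins E t \<and> \<not> honest E (deleg E u). oval E u)
     + (\<Sum>t | t \<in> msgs E \<and> is_tx E t \<and> t \<noteq> genesis E \<and> \<not> honest E (txval E t)
              \<and> tle E t \<tau>.
          \<Sum>u | u \<in> ins E t \<and> honest E (deleg E u). oval E u)"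

definition abc_execution :: "('m,'k) abc \<Rightarrow> bool" where
  "abc_execution E \<longleftrightarrow>
     finite (msgs E)
   \<comment> \<open>genesis\<close>
   \<and> genesis E \<in> msgs E \<and> is_tx E (genesis E) \<and> ins E (genesis E) = {}
   \<and> (\<Sum>p\<leftarrow>outs E (genesis E). fst p) = totalM E
   \<comment> \<open>the time order: strict total order on G respecting references\<close>
   \<and> (\<forall>x\<in>msgs E. \<not> tlt E x x)
   \<and> (\<forall>x\<in>msgs E. \<forall>y\<in>msgs E. \<forall>z\<in>msgs E. tlt E x y \<longrightarrow> tlt E y z \<longrightarrow> tlt E x z)
   \<and> (\<forall>x\<in>msgs E. \<forall>y\<in>msgs E. x \<noteq> y \<longrightarrow> tlt E x y \<or> tlt E y x)
   \<and> (\<forall>x\<in>msgs E. \<forall>y\<in>refs E x. y \<in> msgs E \<and> tlt E y x)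
   \<comment> \<open>well-formed transactions\<close>
   \<and> (\<forall>t\<in>msgs E. is_tx E t \<longrightarrow>
        finite (ins E t)
      \<and> (\<forall>u\<in>ins E t. is_tx E (fst u) \<and> snd u < length (outs E (fst u)))
      \<and> (\<forall>p\<in>set (outs E t). fst p \<ge> 0)
      \<and> (t \<noteq> genesis E \<longrightarrow> ins E t \<noteq> {}
           \<and> (\<Sum>u\<in>ins E t. oval E u) = (\<Sum>p\<leftarrow>outs E t. fst p)))
   \<comment> \<open>well-formed acks\<close>
   \<and> (\<forall>a\<in>msgs E. is_ack E a \<longrightarrow>
        (\<forall>t\<in>signs E a. is_tx E t)
      \<and> (\<forall>p. prev E a = Some p \<longrightarrow> is_ack E p \<and> ackval E p = ackval E a))
   \<comment> \<open>honest validators reference their own previous ack\<close>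
   \<and> (\<forall>a\<in>msgs E. is_ack E a \<and> honest E (ackval E a) \<longrightarrow>
        (case prev E a of
           None \<Rightarrow> \<not> (\<exists>b\<in>msgs E. is_ack E b \<and> ackval E b = ackval E a \<and> tlt E b a)
         | Some p \<Rightarrow> p \<in> msgs E \<and> tlt E p a \<and>
             (\<forall>b\<in>msgs E. is_ack E b \<and> ackval E b = ackval E a \<and> tlt E b a
                 \<longrightarrow> b = p \<or> tlt E b p)))
   \<comment> \<open>honest validators never sign two transactions sharing an input\<close>
   \<and> (\<forall>a\<in>msgs E. \<forall>b\<in>msgs E. is_ack E a \<and> is_ack E b \<and> ackval E a = ackval E b
        \<and> honest E (ackval E a) \<longrightarrow>
        (\<forall>t\<in>signs E a. \<forall>t'\<in>signs E b. t \<noteq> t' \<longrightarrow> ins E t \<inter> ins E t' = {}))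
   \<comment> \<open>honest agents never spend an output twice\<close>
   \<and> (\<forall>t\<in>msgs E. \<forall>t'\<in>msgs E. \<forall>u. is_tx E t \<and> is_tx E t' \<and> u \<in> ins E t \<and> u \<in> ins E t'
        \<and> honest E (owner E u) \<longrightarrow> t = t')
   \<comment> \<open>adversarial stake always below M/3\<close>
   \<and> genesis_adv E < totalM E / 3
   \<and> (\<forall>\<tau>\<in>msgs E. adv_count E \<tau> < totalM E / 3)"

end

theory Submission
  imports Defs
begin

(* Every confirmation happens at a finite stage of the inductive definition of conf. By induction
   on the pair of stages, two witness sets B, B' (for c and d) all of whose adversarially delegated
   confirmed transactions precede the first confirmation satisfy c \<in> past B' or d \<in> past B.
   Otherwise the induction hypothesis makes the transactions confirmed in past B and past B'
   mutually visible and pairwise conflict-free, i.e. one consistent ledger. Each witness set counts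
   more than 2M/3 of its unspent outputs, while the ledger holds at most M, plus the adversary's
   count at its latest adversarial transaction for outputs counted twice; that count is below M/3
   because nothing is confirmed before the first confirmation. So an honest validator signs in both
   sets, and its chain of previous-ack references lets one set see the other's transaction.
   A witness set whose past avoids t0 is, by induction on its stage, of this kind, and comparing
   it with A0 yields the theorem. *)

lemma sum_overlapping_le:
  fixes f :: "'a \<Rightarrow> 'b :: ordered_comm_monoid_add"
  assumes "finite U" "P \<subseteq> U" "P' \<subseteq> U" "P \<inter> P' \<subseteq> Q" "Q \<subseteq> U" "\<And>u. u \<in> U \<Longrightarrow> f u \<ge> 0"
  shows "sum f P + sum f P' \<le> sum f U + sum f Q"
proof -
  have fin: "finite P" "finite P'" using assms(1-3) finite_subset by auto
  have "sum f P + sum f P' = sum f (P \<union> P') + sum f (P \<inter> P')"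
    by (rule sum.union_inter[OF fin, symmetric])
  also have "\<dots> \<le> sum f U + sum f Q"
    using assms by (intro add_mono sum_mono2) (auto intro: finite_subset[OF _ assms(1)])
  finally show ?thesis .
qed

lemma max_sum_induct:
  fixes P :: "nat \<Rightarrow> nat \<Rightarrow> bool"
  assumes "\<And>n m. (\<And>n' m'. max n' m' < max n m \<or> max n' m' = max n m \<and> n' + m' < n + m \<Longrightarrow> P n' m')
    \<Longrightarrow> P n m"
  shows "P n m"
proof -
  have "wf (measures [\<lambda>(n, m). max n m, \<lambda>(n, m). n + m])" by simp
  then have "P (fst p) (snd p)" for p
  proof (induction p rule: wf_induct_rule)
    case (less p)
    show ?case
    proof (rule assms)
      fix n' m'
      assume "max n' m' < max (fst p) (snd p) \<or> max n' m' = max (fst p) (snd p) \<and> n' + m' < fst p + snd p"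
      then show "P n' m'" using less[of "(n', m')"] by (simp add: in_measures case_prod_beta)
    qed
  qed
  then show ?thesis by (metis fst_conv snd_conv)
qed

lemma past1_refl: "x \<in> past1 E x"
  unfolding past1_def by simp

lemma past1_trans: "y \<in> past1 E x \<Longrightarrow> z \<in> past1 E y \<Longrightarrow> z \<in> past1 E x"
  unfolding past1_def by simp

lemma refs_in_past1: "y \<in> refs E x \<Longrightarrow> y \<in> past1 E x"
  unfolding past1_def by auto

lemma past_iff: "y \<in> past E B \<longleftrightarrow> (\<exists>x\<in>B. y \<in> past1 E x)"
  unfolding past_def by (rule UN_iff)

lemma subset_past: "B \<subseteq> past E B"
  unfolding past_def using past1_refl by fast

lemma past_subset_past:
  assumes "B' \<subseteq> past E B"
  shows "past E B' \<subseteq> past E B"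
proof
  fix z assume "z \<in> past E B'"
  then obtain y where y: "y \<in> B'" "z \<in> past1 E y" unfolding past_iff ..
  from y(1) assms have "y \<in> past E B" ..
  then obtain x where x: "x \<in> B" "y \<in> past1 E x" unfolding past_iff ..
  from x(1) past1_trans[OF x(2) y(2)] show "z \<in> past E B" unfolding past_iff ..
qed

lemma refs_in_past: "y \<in> past E B \<Longrightarrow> z \<in> refs E y \<Longrightarrow> z \<in> past E B"
  using past_subset_past[of "{y}" E B] subset_past[of "{y}"] refs_in_past1[of z E y]
  by (auto simp: past_iff)

lemma inputs_in_past: "y \<in> past E B \<Longrightarrow> is_tx E y \<Longrightarrow> u \<in> ins E y \<Longrightarrow> fst u \<in> past E B"
  by (rule refs_in_past) (auto simp: refs_def is_tx_def)

locale abc_run =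
  fixes E :: "('m, 'k) abc"
  assumes exec: "abc_execution E"
begin

lemma finite_msgs: "finite (msgs E)"
  and genesis_in_msgs: "genesis E \<in> msgs E"
  and genesis_is_tx: "is_tx E (genesis E)"
  and genesis_ins: "ins E (genesis E) = {}"
  and genesis_value: "(\<Sum>p\<leftarrow>outs E (genesis E). fst p) = totalM E"
  and tlt_irrefl [rule_format]: "\<forall>x\<in>msgs E. \<not> tlt E x x"
  and tlt_trans [rule_format]:
    "\<forall>x\<in>msgs E. \<forall>y\<in>msgs E. \<forall>z\<in>msgs E. tlt E x y \<longrightarrow> tlt E y z \<longrightarrow> tlt E x z"
  and tlt_total [rule_format]: "\<forall>x\<in>msgs E. \<forall>y\<in>msgs E. x \<noteq> y \<longrightarrow> tlt E x y \<or> tlt E y x"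
  and refs_earlier [rule_format]: "\<forall>x\<in>msgs E. \<forall>y\<in>refs E x. y \<in> msgs E \<and> tlt E y x"
  and tx_wellformed [rule_format]: "\<forall>t\<in>msgs E. is_tx E t \<longrightarrow>
        finite (ins E t)
      \<and> (\<forall>u\<in>ins E t. is_tx E (fst u) \<and> snd u < length (outs E (fst u)))
      \<and> (\<forall>p\<in>set (outs E t). fst p \<ge> 0)
      \<and> (t \<noteq> genesis E \<longrightarrow> ins E t \<noteq> {}
           \<and> (\<Sum>u\<in>ins E t. oval E u) = (\<Sum>p\<leftarrow>outs E t. fst p))"
  and ack_wellformed [rule_format]: "\<forall>a\<in>msgs E. is_ack E a \<longrightarrow>
        (\<forall>t\<in>signs E a. is_tx E t)
      \<and> (\<forall>p. prev E a = Some p \<longrightarrow> is_ack E p \<and> ackval E p = ackval E a)"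
  and honest_prev [rule_format]: "\<forall>a\<in>msgs E. is_ack E a \<and> honest E (ackval E a) \<longrightarrow>
        (case prev E a of
           None \<Rightarrow> \<not> (\<exists>b\<in>msgs E. is_ack E b \<and> ackval E b = ackval E a \<and> tlt E b a)
         | Some p \<Rightarrow> p \<in> msgs E \<and> tlt E p a \<and>
             (\<forall>b\<in>msgs E. is_ack E b \<and> ackval E b = ackval E a \<and> tlt E b a
                 \<longrightarrow> b = p \<or> tlt E b p))"
  and genesis_adv_less: "genesis_adv E < totalM E / 3"
  and adv_count_less [rule_format]: "\<forall>\<tau>\<in>msgs E. adv_count E \<tau> < totalM E / 3"
  using exec unfolding abc_execution_def by argo+

lemma finite_ins: "t \<in> msgs E \<Longrightarrow> is_tx E t \<Longrightarrow> finite (ins E t)"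
  using tx_wellformed[of t] by simp

lemma input_outpoint: "t \<in> msgs E \<Longrightarrow> is_tx E t \<Longrightarrow> u \<in> ins E t \<Longrightarrow>
    is_tx E (fst u) \<and> snd u < length (outs E (fst u))"
  using tx_wellformed[of t] by simp

lemma value_conservation: "t \<in> msgs E \<Longrightarrow> is_tx E t \<Longrightarrow> t \<noteq> genesis E \<Longrightarrow>
    (\<Sum>u\<in>ins E t. oval E u) = (\<Sum>p\<leftarrow>outs E t. fst p)"
  using tx_wellformed[of t] by simp

lemma oval_nonneg:
  assumes "fst u \<in> msgs E" "is_tx E (fst u)" "snd u < length (outs E (fst u))"
  shows "oval E u \<ge> 0"
  using tx_wellformed[OF assms(1,2)] assms(3) unfolding oval_def by simp

lemma inputs_in_msgs: "t \<in> msgs E \<Longrightarrow> is_tx E t \<Longrightarrow> u \<in> ins E t \<Longrightarrow> fst u \<in> msgs E"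
  using refs_earlier[of t "fst u"] by (auto simp: refs_def is_tx_def)

lemma input_oval_nonneg: "t \<in> msgs E \<Longrightarrow> is_tx E t \<Longrightarrow> u \<in> ins E t \<Longrightarrow> oval E u \<ge> 0"
  using oval_nonneg inputs_in_msgs input_outpoint by meson

lemma genesis_adv_nonneg: "genesis_adv E \<ge> 0"
  unfolding genesis_adv_def using genesis_in_msgs genesis_is_tx by (intro sum_nonneg oval_nonneg) auto

lemma totalM_pos: "totalM E > 0"
  using genesis_adv_nonneg genesis_adv_less by linarith

lemma past1_earlier:
  assumes "x \<in> msgs E" and "y \<in> past1 E x"
  shows "y \<in> msgs E \<and> tle E y x"
proof -
  from assms(2) have "(x, y) \<in> {(u, w). w \<in> refs E u}\<^sup>*" unfolding past1_def by simp
  then show ?thesis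
  proof (induction rule: rtrancl_induct)
    case (step y z)
    then show ?case using assms(1) refs_earlier tlt_trans unfolding tle_def by blast
  qed (simp add: assms(1) tle_def)
qed

lemma past_msgs: "B \<subseteq> msgs E \<Longrightarrow> past E B \<subseteq> msgs E"
  unfolding past_def using past1_earlier by blast

lemma tle_trans: "x \<in> msgs E \<Longrightarrow> y \<in> msgs E \<Longrightarrow> z \<in> msgs E \<Longrightarrow> tle E x y \<Longrightarrow> tle E y z \<Longrightarrow> tle E x z"
  unfolding tle_def using tlt_trans by blast

lemma tle_antisym: "x \<in> msgs E \<Longrightarrow> y \<in> msgs E \<Longrightarrow> tle E x y \<Longrightarrow> tle E y x \<Longrightarrow> x = y"
  unfolding tle_def using tlt_trans tlt_irrefl by blast

definition time_rank :: "'m \<Rightarrow> nat" where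
  "time_rank x = card {y \<in> msgs E. tlt E y x}"

lemma time_rank_less:
  assumes "x \<in> msgs E" "y \<in> msgs E" "tlt E x y"
  shows "time_rank x < time_rank y"
  unfolding time_rank_def
proof (rule psubset_card_mono)
  show "finite {z \<in> msgs E. tlt E z y}" using finite_msgs by simp
  show "{z \<in> msgs E. tlt E z x} \<subset> {z \<in> msgs E. tlt E z y}"
    using assms tlt_trans tlt_irrefl by blast
qed

lemma tmax_greatest:
  assumes "finite A" "A \<noteq> {}" "A \<subseteq> msgs E"
  shows "tmax E A \<in> A \<and> (\<forall>a\<in>A. tle E a (tmax E A))"
proof -
  obtain m where m: "m \<in> A" "time_rank m = Max (time_rank ` A)"
    using Max_in[of "time_rank ` A"] assms(1,2) by (metis finite_imageI image_iff image_is_empty)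
  have greatest: "\<forall>a\<in>A. tle E a m"
  proof
    fix a assume a: "a \<in> A"
    have "\<not> tlt E m a"
    proof
      assume "tlt E m a"
      then have "time_rank m < time_rank a" using time_rank_less a m(1) assms(3) by blast
      moreover have "time_rank a \<le> time_rank m" using m(2) a assms(1) by simp
      ultimately show False by simp
    qed
    then show "tle E a m" using tlt_total[of a m] a m(1) assms(3) unfolding tle_def by blast
  qed
  have "tmax E A = m" unfolding tmax_def
  proof (rule the_equality)
    fix m' assume "m' \<in> A \<and> (\<forall>a\<in>A. tle E a m')"
    then show "m' = m" using greatest m(1) assms(3) tle_antisym by blast
  qed (use m(1) greatest in blast)
  then show ?thesis using m(1) greatest by simp
qed

lemma honest_ack_in_past:
  assumes "a \<in> msgs E" "a' \<in> msgs E" "is_ack E a" "is_ack E a'"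
    and "ackval E a = ackval E a'" "honest E (ackval E a')" "tle E a a'"
  shows "a \<in> past1 E a'"
  using assms(2-)
proof (induction "time_rank a'" arbitrary: a' rule: less_induct)
  case less
  show ?case
  proof (cases "a = a'")
    case True
    then show ?thesis by (simp add: past1_refl)
  next
    case False
    with less.prems have "tlt E a a'" by (simp add: tle_def)
    with less.prems assms(1,3) obtain p where p: "prev E a' = Some p" "p \<in> msgs E" "tlt E p a'" "tle E a p"
      using honest_prev[of a'] unfolding tle_def by (cases "prev E a'") auto
    have "is_ack E p" "ackval E p = ackval E a'"
      using ack_wellformed[OF less.prems(1,3)] p(1) by auto
    then have a_p: "a \<in> past1 E p"
      using less.hyps[OF time_rank_less[OF p(2) less.prems(1) p(3)] p(2)] less.prems p(4) by simp
    have "p \<in> refs E a'" using p(1) less.prems(3) by (simp add: refs_def)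
    from past1_trans[OF refs_in_past1[OF this] a_p] show ?thesis .
  qed
qed

lemma honest_signer_orders:
  assumes "v \<in> signers E c B" "v \<in> signers E d B'" "honest E v"
    and "B \<subseteq> msgs E" "B' \<subseteq> msgs E" "\<forall>a\<in>B. is_ack E a" "\<forall>a\<in>B'. is_ack E a"
  shows "c \<in> past E B' \<or> d \<in> past E B"
proof -
  obtain a a' where a: "a \<in> B" "c \<in> signs E a" "ackval E a = v"
    and a': "a' \<in> B'" "d \<in> signs E a'" "ackval E a' = v"
    using assms(1,2) unfolding signers_def by auto
  have acks: "a \<in> msgs E" "a' \<in> msgs E" "is_ack E a" "is_ack E a'"
    using a(1) a'(1) assms(4-7) by auto
  have c: "c \<in> past1 E a" and d: "d \<in> past1 E a'"
    using a(2) a'(2) acks(3,4) by (auto intro: refs_in_past1 simp: refs_def)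
  have "tle E a a' \<or> tle E a' a"
    using tlt_total[OF acks(1,2)] unfolding tle_def by blast
  then show ?thesis
  proof
    assume "tle E a a'"
    then have "a \<in> past1 E a'" using honest_ack_in_past[OF acks] a(3) a'(3) assms(3) by simp
    with a'(1) past1_trans[OF this c] show ?thesis unfolding past_iff by blast
  next
    assume "tle E a' a"
    then have "a' \<in> past1 E a" using honest_ack_in_past[OF acks(2,1,4,3)] a(3) a'(3) assms(3) by simp
    with a(1) past1_trans[OF this d] show ?thesis unfolding past_iff by blast
  qed
qed

section \<open>Stages of confirmation\<close>

(* Kleene iterates of conf_step; since msgs E is finite, they exhaust conf. *)
definition conf_approx :: "nat \<Rightarrow> 'm set \<Rightarrow> 'm \<Rightarrow> bool" where
  "conf_approx n = (conf_step E ^^ n) (\<lambda>_ _. False)"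

lemma conf_approx_0 [simp]: "\<not> conf_approx 0 D t"
  by (simp add: conf_approx_def)

lemma conf_approx_Suc: "conf_approx (Suc n) D t \<longleftrightarrow> t = genesis E \<or>
    (is_tx E t \<and> (\<forall>u\<in>ins E t. conf_approx n D (fst u)) \<and> (\<exists>A. A \<subseteq> D \<and> witness_with E (conf_approx n) t A))"
  by (simp add: conf_approx_def conf_step_def)

lemma stake_with_mono:
  assumes "\<And>x. x \<in> X \<Longrightarrow> x \<in> msgs E \<Longrightarrow> is_tx E x \<Longrightarrow> C X x \<Longrightarrow> C' X x"
  shows "stake_with E C X v \<le> stake_with E C' X v"
  unfolding stake_with_def
proof (rule sum_mono2)
  show "finite {u. fst u \<in> X \<and> fst u \<in> msgs E \<and> is_tx E (fst u) \<and> C' X (fst u)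
              \<and> snd u < length (outs E (fst u)) \<and> deleg E u = v \<and> unspent E X u}"
    by (rule finite_subset[of _ "SIGMA x:msgs E. {..<length (outs E x)}"]) (auto simp: finite_msgs)
qed (use assms oval_nonneg in auto)

lemma witness_with_mono:
  assumes "witness_with E C t A"
    and "\<And>x. x \<in> past E A \<Longrightarrow> x \<in> msgs E \<Longrightarrow> is_tx E x \<Longrightarrow> C (past E A) x \<Longrightarrow> C' (past E A) x"
  shows "witness_with E C' t A"
proof -
  have "(\<Sum>v\<in>signers E t A. stake_with E C (past E A) v) \<le> (\<Sum>v\<in>signers E t A. stake_with E C' (past E A) v)"
    by (intro sum_mono stake_with_mono assms(2))
  with assms(1) show ?thesis unfolding witness_with_def by auto
qed

lemma mono_conf_step: "mono (conf_step E)"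
proof (rule monoI, intro le_funI le_boolI)
  fix C C' :: "'m set \<Rightarrow> 'm \<Rightarrow> bool" and D t
  assume "C \<le> C'" and "conf_step E C D t"
  then show "conf_step E C' D t"
    unfolding conf_step_def using witness_with_mono[of C t _ C'] by (auto simp: le_fun_def)
qed

lemma conf_unfold: "conf E = conf_step E (conf E)"
  unfolding conf_def by (rule lfp_unfold[OF mono_conf_step])

lemma conf_approx_le_Suc: "conf_approx n \<le> conf_approx (Suc n)"
proof (induction n)
  case (Suc n)
  then show ?case unfolding conf_approx_def funpow.simps o_apply by (rule monoD[OF mono_conf_step])
qed (simp add: conf_approx_def le_fun_def)

lemma conf_approx_mono: "n \<le> N \<Longrightarrow> conf_approx n D t \<Longrightarrow> conf_approx N D t"
  using lift_Suc_mono_le[of conf_approx, OF conf_approx_le_Suc] by (auto simp: le_fun_def)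

lemma conf_approx_le_conf: "conf_approx n \<le> conf E"
proof (induction n)
  case (Suc n)
  then have "conf_step E (conf_approx n) \<le> conf_step E (conf E)" by (rule monoD[OF mono_conf_step])
  then show ?case using conf_unfold by (simp add: conf_approx_def)
qed (simp add: conf_approx_def le_fun_def)

lemma conf_approx_mono_set: "conf_approx n D t \<Longrightarrow> D \<subseteq> D' \<Longrightarrow> conf_approx n D' t"
proof (induction n arbitrary: t)
  case (Suc n)
  then show ?case unfolding conf_approx_Suc by blast
qed simp

lemma conf_approx_common_level:
  assumes "finite S" "\<And>x. x \<in> S \<Longrightarrow> \<exists>n. conf_approx n D x"
  shows "\<exists>N. \<forall>x\<in>S. conf_approx N D x"
proof -
  obtain lvl where lvl: "\<And>x. x \<in> S \<Longrightarrow> conf_approx (lvl x) D x"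
    using assms(2) by metis
  have "conf_approx (Max (insert 0 (lvl ` S))) D x" if "x \<in> S" for x
    using conf_approx_mono[OF _ lvl[OF that]] assms(1) that by simp
  then show ?thesis by blast
qed

lemma witness_with_conf_approx:
  assumes "witness_with E C t A"
    and "\<And>x. x \<in> past E A \<Longrightarrow> x \<in> msgs E \<Longrightarrow> is_tx E x \<Longrightarrow> C (past E A) x \<Longrightarrow>
           \<exists>n. conf_approx n (past E A) x"
  shows "\<exists>n. witness_with E (conf_approx n) t A"
proof -
  let ?S = "{x \<in> msgs E. x \<in> past E A \<and> is_tx E x \<and> C (past E A) x}"
  obtain N where "\<forall>x\<in>?S. conf_approx N (past E A) x"
    using conf_approx_common_level[of ?S "past E A"] assms(2) finite_msgs by auto
  then have "witness_with E (conf_approx N) t A"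
    by (intro witness_with_mono[OF assms(1)]) auto
  then show ?thesis ..
qed

lemma conf_imp_conf_approx:
  assumes "conf E D t" "t \<in> msgs E"
  shows "\<exists>n. conf_approx n D t"
proof -
  let ?P = "\<lambda>D t. t \<in> msgs E \<longrightarrow> (\<exists>n. conf_approx n D t)"
  have "conf E \<le> ?P" unfolding conf_def
  proof (rule lfp_induct[OF mono_conf_step], intro le_funI le_boolI impI)
    fix D t
    assume step: "conf_step E (inf (lfp (conf_step E)) ?P) D t" and t: "t \<in> msgs E"
    show "\<exists>n. conf_approx n D t"
    proof (cases "t = genesis E")
      case True
      then have "conf_approx (Suc 0) D t" by (simp add: conf_approx_Suc)
      then show ?thesis ..
    next
      case False
      with step obtain A where tx: "is_tx E t" and ins: "\<forall>u\<in>ins E t. ?P D (fst u)"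
        and A: "A \<subseteq> D" "witness_with E (inf (lfp (conf_step E)) ?P) t A"
        unfolding conf_step_def by auto
      obtain n1 where n1: "\<forall>x\<in>fst ` ins E t. conf_approx n1 D x"
        using conf_approx_common_level[of "fst ` ins E t" D] finite_ins[OF t tx] ins
          inputs_in_msgs[OF t tx] by auto
      obtain n2 where n2: "witness_with E (conf_approx n2) t A"
        using witness_with_conf_approx[OF A(2)] by auto
      have "witness_with E (conf_approx (max n1 n2)) t A"
        by (rule witness_with_mono[OF n2]) (simp add: conf_approx_mono[of n2 "max n1 n2"])
      moreover have "\<forall>u\<in>ins E t. conf_approx (max n1 n2) D (fst u)"
        using n1 conf_approx_mono[of n1 "max n1 n2"] by simp
      ultimately have "conf_approx (Suc (max n1 n2)) D t"
        using tx A(1) by (auto simp: conf_approx_Suc)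
      then show ?thesis ..
    qed
  qed
  with assms show ?thesis by (auto simp: le_fun_def)
qed

lemma witnessing_conf_approx: "witnessing E t A \<Longrightarrow> \<exists>n. witness_with E (conf_approx n) t A"
  unfolding witnessing_def using conf_imp_conf_approx by (blast intro: witness_with_conf_approx)

lemma conf_mono_set: "conf E D t \<Longrightarrow> t \<in> msgs E \<Longrightarrow> D \<subseteq> D' \<Longrightarrow> conf E D' t"
  using conf_imp_conf_approx conf_approx_mono_set conf_approx_le_conf by (blast dest: le_funD)

section \<open>Stake accounting on a consistent ledger\<close>

definition outpoints :: "'m set \<Rightarrow> ('m \<times> nat) set" where
  "outpoints T = (SIGMA x:T. {..<length (outs E x)})"

definition spent :: "'m set \<Rightarrow> ('m \<times> nat) set" where
  "spent T = (\<Union>x\<in>T. ins E x)"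

definition valid_ledger :: "'m set \<Rightarrow> bool" where
  "valid_ledger T \<longleftrightarrow> T \<subseteq> msgs E \<and> (\<forall>x\<in>T. is_tx E x) \<and> (\<forall>x\<in>T. \<forall>u\<in>ins E x. fst u \<in> T)
     \<and> (\<forall>x\<in>T. \<forall>y\<in>T. x \<noteq> y \<longrightarrow> ins E x \<inter> ins E y = {})"

definition honest_input_value :: "'m \<Rightarrow> real" where
  "honest_input_value t = (\<Sum>u | u \<in> ins E t \<and> honest E (deleg E u). oval E u)"

lemma sum_outputs: "(\<Sum>i<length (outs E x). oval E (x, i)) = (\<Sum>p\<leftarrow>outs E x. fst p)"
  unfolding oval_def by (simp add: sum_list_sum_nth atLeast0LessThan)

lemma finite_outpoints: "T \<subseteq> msgs E \<Longrightarrow> finite (outpoints T)"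
  unfolding outpoints_def using finite_subset[OF _ finite_msgs] by auto

lemma sum_unspent_outpoints:
  assumes T: "valid_ledger T"
  shows "(\<Sum>u | u \<in> outpoints T - spent T \<and> R u. oval E u)
       = (\<Sum>x\<in>T. (\<Sum>i | i < length (outs E x) \<and> R (x, i). oval E (x, i))
                 - (\<Sum>u | u \<in> ins E x \<and> R u. oval E u))"
proof -
  let ?out = "SIGMA x:T. {i. i < length (outs E x) \<and> R (x, i)}"
  let ?spent = "\<Union>x\<in>T. {u. u \<in> ins E x \<and> R u}"
  have Tm: "T \<subseteq> msgs E" and fT: "finite T" and tx: "\<And>x. x \<in> T \<Longrightarrow> is_tx E x"
    using T finite_subset[OF _ finite_msgs] unfolding valid_ledger_def by auto
  have fins: "\<And>x. x \<in> T \<Longrightarrow> finite (ins E x)" using finite_ins Tm tx by blast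
  have "{u. u \<in> outpoints T - spent T \<and> R u} = ?out - ?spent"
    unfolding outpoints_def spent_def by auto
  moreover have "?spent \<subseteq> ?out"
    using T input_outpoint Tm unfolding valid_ledger_def by fastforce
  moreover have "finite ?out" using fT by auto
  ultimately have "(\<Sum>u | u \<in> outpoints T - spent T \<and> R u. oval E u) = sum (oval E) ?out - sum (oval E) ?spent"
    by (simp add: sum_diff)
  also have "sum (oval E) ?out = (\<Sum>x\<in>T. \<Sum>i | i < length (outs E x) \<and> R (x, i). oval E (x, i))"
    using fT by (subst sum.Sigma) (auto simp: case_prod_beta)
  also have "sum (oval E) ?spent = (\<Sum>x\<in>T. \<Sum>u | u \<in> ins E x \<and> R u. oval E u)"
  proof (rule sum.UNION_disjoint[OF fT])
    show "\<forall>x\<in>T. finite {u. u \<in> ins E x \<and> R u}" using fins by simp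
    show "\<forall>x\<in>T. \<forall>y\<in>T. x \<noteq> y \<longrightarrow> {u. u \<in> ins E x \<and> R u} \<inter> {u. u \<in> ins E y \<and> R u} = {}"
      using T unfolding valid_ledger_def by blast
  qed
  finally show ?thesis by (simp add: sum_subtractf)
qed

lemma unspent_value_le_total:
  assumes "valid_ledger T"
  shows "sum (oval E) (outpoints T - spent T) \<le> totalM E"
proof -
  have tx: "\<And>x. x \<in> T \<Longrightarrow> x \<in> msgs E \<and> is_tx E x" using assms unfolding valid_ledger_def by auto
  have "sum (oval E) (outpoints T - spent T) = (\<Sum>u | u \<in> outpoints T - spent T \<and> True. oval E u)"
    by (simp only: simp_thms Collect_mem_eq)
  also have "\<dots> = (\<Sum>x\<in>T. if x = genesis E then totalM E else 0)"
    unfolding sum_unspent_outpoints[OF assms]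
    using genesis_value genesis_ins tx value_conservation sum_outputs
    by (intro sum.cong) (auto simp: lessThan_def[symmetric])
  also have "\<dots> \<le> totalM E"
    using totalM_pos finite_subset[OF _ finite_msgs] tx by (simp add: sum.delta subset_iff)
  finally show ?thesis .
qed

lemma adversarial_balance_le:
  assumes x: "x \<in> msgs E" "is_tx E x"
  shows "(\<Sum>i | i < length (outs E x) \<and> \<not> honest E (deleg E (x, i)). oval E (x, i))
         - (\<Sum>u | u \<in> ins E x \<and> \<not> honest E (deleg E u). oval E u)
       \<le> (if x = genesis E then genesis_adv E else 0)
         + (if x \<noteq> genesis E \<and> \<not> honest E (txval E x) then honest_input_value x else 0)"
proof -
  let ?adv_in = "\<Sum>u | u \<in> ins E x \<and> \<not> honest E (deleg E u). oval E u"
  have "?adv_in \<ge> 0" using input_oval_nonneg[OF x] by (intro sum_nonneg) simp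
  moreover have "(\<Sum>u\<in>ins E x. oval E u) = ?adv_in + honest_input_value x"
    unfolding honest_input_value_def using finite_ins[OF x]
    by (subst sum.union_disjoint[symmetric]) (auto intro: sum.cong)
  moreover have "x \<noteq> genesis E \<Longrightarrow> deleg E (x, i) = txval E x" for i
    by (simp add: deleg_def)
  ultimately show ?thesis
    using value_conservation[OF x] sum_outputs[of x] genesis_ins
    by (cases "x = genesis E") (auto simp: deleg_def genesis_adv_def lessThan_def)
qed

lemma adversarial_unspent_value_le:
  assumes "valid_ledger T"
  shows "(\<Sum>u | u \<in> outpoints T - spent T \<and> \<not> honest E (deleg E u). oval E u)
       \<le> genesis_adv E + (\<Sum>x | x \<in> T \<and> x \<noteq> genesis E \<and> \<not> honest E (txval E x). honest_input_value x)"
proof -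
  have T: "T \<subseteq> msgs E" "\<And>x. x \<in> T \<Longrightarrow> is_tx E x" using assms unfolding valid_ledger_def by auto
  then have fT: "finite T" using finite_subset finite_msgs by blast
  have "(\<Sum>u | u \<in> outpoints T - spent T \<and> \<not> honest E (deleg E u). oval E u)
      \<le> (\<Sum>x\<in>T. (if x = genesis E then genesis_adv E else 0)
         + (if x \<noteq> genesis E \<and> \<not> honest E (txval E x) then honest_input_value x else 0))"
    unfolding sum_unspent_outpoints[OF assms] using T by (intro sum_mono adversarial_balance_le) auto
  also have "\<dots> = (if genesis E \<in> T then genesis_adv E else 0)
      + (\<Sum>x | x \<in> T \<and> x \<noteq> genesis E \<and> \<not> honest E (txval E x). honest_input_value x)"
    using fT by (simp add: sum.distrib sum.delta sum.inter_filter)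
  also have "\<dots> \<le> genesis_adv E + (\<Sum>x | x \<in> T \<and> x \<noteq> genesis E \<and> \<not> honest E (txval E x). honest_input_value x)"
    using genesis_adv_nonneg by simp
  finally show ?thesis .
qed

definition counted_outs :: "('m set \<Rightarrow> 'm \<Rightarrow> bool) \<Rightarrow> 'm set \<Rightarrow> ('m \<times> nat) set" where
  "counted_outs C X = {u. fst u \<in> X \<and> fst u \<in> msgs E \<and> is_tx E (fst u) \<and> C X (fst u)
     \<and> snd u < length (outs E (fst u)) \<and> unspent E X u}"

lemma sum_stake_with:
  assumes "finite S"
  shows "(\<Sum>v\<in>S. stake_with E C X v) = (\<Sum>u | u \<in> counted_outs C X \<and> deleg E u \<in> S. oval E u)"
proof -
  have "finite {u. u \<in> counted_outs C X \<and> deleg E u \<in> S}"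
    by (rule finite_subset[OF _ finite_outpoints[OF order_refl]]) (auto simp: counted_outs_def outpoints_def)
  then have "(\<Sum>u | u \<in> counted_outs C X \<and> deleg E u \<in> S. oval E u)
      = (\<Sum>v\<in>S. \<Sum>u | u \<in> {u. u \<in> counted_outs C X \<and> deleg E u \<in> S} \<and> deleg E u = v. oval E u)"
    using assms by (intro sum.group[symmetric]) auto
  also have "\<dots> = (\<Sum>v\<in>S. stake_with E C X v)"
    unfolding stake_with_def counted_outs_def by (intro sum.cong) auto
  finally show ?thesis ..
qed

definition confirmed_txs :: "nat \<Rightarrow> 'm set \<Rightarrow> 'm set" where
  "confirmed_txs n Y = {x \<in> Y. is_tx E x \<and> conf_approx n Y x}"

lemma confirmed_txs_witness:
  assumes "x \<in> confirmed_txs n Y" "x \<noteq> genesis E"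
  obtains k B1 where "n = Suc k" "B1 \<subseteq> Y" "witness_with E (conf_approx k) x B1"
proof -
  obtain k where n: "n = Suc k" using assms(1) unfolding confirmed_txs_def by (cases n) auto
  with assms show ?thesis using that unfolding confirmed_txs_def by (auto simp: conf_approx_Suc)
qed

lemma confirmed_input_confirmed:
  assumes "B \<subseteq> msgs E" "x \<in> confirmed_txs n (past E B)" "u \<in> ins E x"
  shows "fst u \<in> confirmed_txs n (past E B)"
proof -
  have x: "x \<in> past E B" "is_tx E x" "conf_approx n (past E B) x"
    using assms(2) unfolding confirmed_txs_def by auto
  have "x \<noteq> genesis E" using assms(3) genesis_ins by auto
  moreover obtain k where n: "n = Suc k" using x(3) by (cases n) auto
  ultimately have "conf_approx k (past E B) (fst u)" using x(3) assms(3) by (simp add: conf_approx_Suc)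
  then have "conf_approx n (past E B) (fst u)" using n conf_approx_mono[of k n] by simp
  moreover have "is_tx E (fst u)" using input_outpoint x(1,2) assms(1,3) past_msgs by blast
  ultimately show ?thesis using inputs_in_past[OF x(1,2) assms(3)] unfolding confirmed_txs_def by simp
qed

lemma counted_outs_subset_unspent:
  assumes "confirmed_txs n Y \<subseteq> T" "\<And>x. x \<in> T \<Longrightarrow> x \<noteq> genesis E \<Longrightarrow> x \<in> Y"
    and "\<And>x. x \<in> T \<Longrightarrow> is_tx E x"
  shows "counted_outs (conf_approx n) Y \<subseteq> outpoints T - spent T"
proof
  fix u assume u: "u \<in> counted_outs (conf_approx n) Y"
  then have "fst u \<in> T" using assms(1) unfolding counted_outs_def confirmed_txs_def by auto
  moreover have "u \<notin> spent T"
  proof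
    assume "u \<in> spent T"
    then obtain x where "x \<in> T" "u \<in> ins E x" unfolding spent_def by auto
    moreover from this have "x \<in> Y" using assms(2) genesis_ins by auto
    ultimately show False using u assms(3) unfolding counted_outs_def unspent_def by auto
  qed
  ultimately show "u \<in> outpoints T - spent T"
    using u unfolding counted_outs_def outpoints_def by (cases u) auto
qed

lemma stake_of_two_witness_sets_le:
  fixes n m :: nat and B B' :: "'m set"
  defines "T \<equiv> confirmed_txs n (past E B) \<union> confirmed_txs m (past E B')"
  assumes ledger: "valid_ledger T"
    and cross: "\<And>x. x \<in> confirmed_txs n (past E B) \<Longrightarrow> x \<noteq> genesis E \<Longrightarrow> x \<in> past E B'"
      "\<And>x. x \<in> confirmed_txs m (past E B') \<Longrightarrow> x \<noteq> genesis E \<Longrightarrow> x \<in> past E B"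
    and S: "finite S" "finite S'" "\<And>v. v \<in> S \<Longrightarrow> v \<in> S' \<Longrightarrow> \<not> honest E v"
  shows "(\<Sum>v\<in>S. stake_with E (conf_approx n) (past E B) v)
       + (\<Sum>v\<in>S'. stake_with E (conf_approx m) (past E B') v)
     \<le> totalM E + genesis_adv E
       + (\<Sum>x | x \<in> T \<and> x \<noteq> genesis E \<and> \<not> honest E (txval E x). honest_input_value x)"
proof -
  let ?U = "outpoints T - spent T"
  let ?P = "{u. u \<in> counted_outs (conf_approx n) (past E B) \<and> deleg E u \<in> S}"
  let ?P' = "{u. u \<in> counted_outs (conf_approx m) (past E B') \<and> deleg E u \<in> S'}"
  have Tm: "T \<subseteq> msgs E" and Ttx: "\<And>x. x \<in> T \<Longrightarrow> is_tx E x"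
    using ledger unfolding valid_ledger_def by auto
  have "?P \<subseteq> ?U" "?P' \<subseteq> ?U"
    using counted_outs_subset_unspent[of n "past E B" T] counted_outs_subset_unspent[of m "past E B'" T]
      cross Ttx unfolding T_def confirmed_txs_def by blast+
  moreover have "?P \<inter> ?P' \<subseteq> {u. u \<in> ?U \<and> \<not> honest E (deleg E u)}"
    using calculation S(3) by blast
  moreover have "\<And>u. u \<in> ?U \<Longrightarrow> oval E u \<ge> 0"
    using Tm Ttx oval_nonneg unfolding outpoints_def by auto
  ultimately have "sum (oval E) ?P + sum (oval E) ?P'
      \<le> sum (oval E) ?U + (\<Sum>u | u \<in> ?U \<and> \<not> honest E (deleg E u). oval E u)"
    using finite_outpoints[OF Tm] by (intro sum_overlapping_le) auto
  also have "\<dots> \<le> totalM E + (genesis_adv E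
      + (\<Sum>x | x \<in> T \<and> x \<noteq> genesis E \<and> \<not> honest E (txval E x). honest_input_value x))"
    by (intro add_mono unspent_value_le_total adversarial_unspent_value_le ledger)
  finally show ?thesis by (simp add: sum_stake_with S)
qed

lemma valid_ledger_confirmed:
  fixes n m :: nat and B B' :: "'m set"
  defines "T \<equiv> confirmed_txs n (past E B) \<union> confirmed_txs m (past E B')"
  assumes "B \<subseteq> msgs E" "B' \<subseteq> msgs E"
    and "\<And>x y. x \<in> T \<Longrightarrow> y \<in> T \<Longrightarrow> x \<noteq> y \<Longrightarrow> ins E x \<inter> ins E y = {}"
  shows "valid_ledger T"
proof -
  have "T \<subseteq> msgs E" using past_msgs assms(2,3) unfolding T_def confirmed_txs_def by blast
  moreover have "\<forall>x\<in>T. \<forall>u\<in>ins E x. fst u \<in> T"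
    using confirmed_input_confirmed[OF assms(2)] confirmed_input_confirmed[OF assms(3)] unfolding T_def by blast
  ultimately show ?thesis using assms(4) unfolding valid_ledger_def T_def confirmed_txs_def by blast
qed

lemma witness_with_nonempty: "witness_with E C t B \<Longrightarrow> B \<noteq> {}"
  using totalM_pos unfolding witness_with_def signers_def by auto

end

section \<open>Consistency after the first confirmation\<close>

locale first_confirmation = abc_run E for E :: "('m, 'k) abc" +
  fixes t0 :: 'm and A0 :: "'m set"
  assumes A0_msgs: "A0 \<subseteq> msgs E"
    and A0_witnessing: "witnessing E t0 A0"
    and A0_first: "\<And>t A. t \<in> msgs E \<Longrightarrow> is_tx E t \<Longrightarrow> t \<noteq> genesis E \<Longrightarrow>
      conf E (msgs E) t \<Longrightarrow> A \<subseteq> msgs E \<Longrightarrow> witnessing E t A \<Longrightarrow> tle E (tmax E A0) (tmax E A)"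
begin

lemma A0_tmax: "tmax E A0 \<in> A0" "\<And>a. a \<in> A0 \<Longrightarrow> tle E a (tmax E A0)"
  using tmax_greatest[OF _ witness_with_nonempty A0_msgs] A0_witnessing
  unfolding witnessing_def witness_with_def by auto

lemma tmax_A0_msgs: "tmax E A0 \<in> msgs E"
  using A0_tmax A0_msgs by auto

lemma tx_in_past_A0_before:
  assumes "x \<in> past E A0" "is_tx E x"
  shows "tlt E x (tmax E A0)"
proof -
  obtain a where a: "a \<in> A0" "x \<in> past1 E a" using assms(1) unfolding past_iff ..
  have "x \<in> msgs E" "tle E x a" using past1_earlier a A0_msgs by auto
  then have "tle E x (tmax E A0)"
    using tle_trans A0_tmax(2)[OF a(1)] a(1) A0_msgs tmax_A0_msgs by blast
  moreover have "is_ack E (tmax E A0)"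
    using A0_witnessing A0_tmax(1) unfolding witnessing_def witness_with_def by auto
  ultimately show ?thesis using assms(2) unfolding tle_def is_tx_def by auto
qed

lemma nothing_confirmed_before_first:
  assumes "\<tau> \<in> msgs E" "tlt E \<tau> (tmax E A0)" "t \<in> msgs E" "is_tx E t" "t \<noteq> genesis E"
  shows "\<not> conf E (prefix E \<tau>) t"
proof
  assume conf: "conf E (prefix E \<tau>) t"
  have prefix: "prefix E \<tau> \<subseteq> msgs E" unfolding prefix_def by auto
  from conf obtain B where B: "B \<subseteq> prefix E \<tau>" "witnessing E t B"
    using assms(5) conf_unfold unfolding conf_step_def witnessing_def by metis
  have "conf E (msgs E) t" using conf_mono_set[OF conf assms(3) prefix] .
  then have "tle E (tmax E A0) (tmax E B)" using A0_first assms(3-5) B prefix by blast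
  moreover have "tmax E B \<in> prefix E \<tau>"
    using tmax_greatest[OF _ witness_with_nonempty] B prefix
    unfolding witnessing_def witness_with_def by blast
  ultimately have "tle E (tmax E A0) \<tau>"
    using tle_trans tmax_A0_msgs assms(1) unfolding prefix_def by blast
  with assms(1,2) show False using tlt_trans tlt_irrefl tmax_A0_msgs unfolding tle_def by blast
qed

lemma adversarial_value_before_first_less:
  assumes "T \<subseteq> msgs E" "\<And>x. x \<in> T \<Longrightarrow> is_tx E x"
    and "\<And>x. x \<in> T \<Longrightarrow> x \<noteq> genesis E \<Longrightarrow> \<not> honest E (txval E x) \<Longrightarrow> tlt E x (tmax E A0)"
  shows "genesis_adv E + (\<Sum>x | x \<in> T \<and> x \<noteq> genesis E \<and> \<not> honest E (txval E x). honest_input_value x)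
     < totalM E / 3"
proof (cases "{x. x \<in> T \<and> x \<noteq> genesis E \<and> \<not> honest E (txval E x)} = {}")
  case True
  then show ?thesis using genesis_adv_less by (simp only: sum.empty add_0_right)
next
  case False
  let ?X = "{x. x \<in> T \<and> x \<noteq> genesis E \<and> \<not> honest E (txval E x)}"
  \<comment> \<open>Nothing honest is confirmed before \<open>\<tau>\<close>, so \<open>adv_count E \<tau>\<close> still contains every honest input
    of an adversarial transaction up to \<open>\<tau>\<close>.\<close>
  define \<tau> where "\<tau> = tmax E ?X"
  have X: "?X \<subseteq> msgs E" "finite ?X" using assms(1) finite_subset[OF _ finite_msgs] by auto
  have \<tau>: "\<tau> \<in> ?X" "\<And>x. x \<in> ?X \<Longrightarrow> tle E x \<tau>"
    using tmax_greatest[OF X(2) False X(1)] unfolding \<tau>_def by auto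
  have \<tau>_msgs: "\<tau> \<in> msgs E" using \<tau>(1) assms(1) by auto
  have no_conf: "{t. t \<in> msgs E \<and> is_tx E t \<and> t \<noteq> genesis E \<and> honest E (txval E t)
      \<and> conf E (prefix E \<tau>) t} = {}"
    using nothing_confirmed_before_first[OF \<tau>_msgs assms(3)] \<tau>(1) by blast
  have "(\<Sum>x\<in>?X. honest_input_value x) \<le> (\<Sum>t | t \<in> msgs E \<and> is_tx E t \<and> t \<noteq> genesis E
      \<and> \<not> honest E (txval E t) \<and> tle E t \<tau>. honest_input_value t)"
  proof (rule sum_mono2)
    show "finite {t. t \<in> msgs E \<and> is_tx E t \<and> t \<noteq> genesis E \<and> \<not> honest E (txval E t) \<and> tle E t \<tau>}"
      using finite_msgs by simp
    show "?X \<subseteq> {t. t \<in> msgs E \<and> is_tx E t \<and> t \<noteq> genesis E \<and> \<not> honest E (txval E t) \<and> tle E t \<tau>}"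
      using \<tau>(2) assms(1,2) by auto
  qed (auto simp: honest_input_value_def intro!: sum_nonneg input_oval_nonneg)
  then have "genesis_adv E + (\<Sum>x\<in>?X. honest_input_value x) \<le> adv_count E \<tau>"
    unfolding adv_count_def no_conf honest_input_value_def by simp
  with adv_count_less[OF \<tau>_msgs] show ?thesis by simp
qed

lemma witness_with_conflict_free:
  "witness_with E C t A \<Longrightarrow> t' \<in> past E A \<Longrightarrow> is_tx E t' \<Longrightarrow> t' \<noteq> t \<Longrightarrow> ins E t' \<inter> ins E t = {}"
  unfolding witness_with_def by blast

definition early_witness :: "nat \<Rightarrow> 'm \<Rightarrow> 'm set \<Rightarrow> bool" where
  "early_witness n c B \<longleftrightarrow> B \<subseteq> msgs E \<and> witness_with E (conf_approx n) c B \<and>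
     (\<forall>x\<in>confirmed_txs n (past E B). x \<noteq> genesis E \<longrightarrow> \<not> honest E (txval E x) \<longrightarrow> tlt E x (tmax E A0))"

lemma early_witness_of_confirmed:
  assumes "early_witness n c B" "x \<in> confirmed_txs n (past E B)" "x \<noteq> genesis E"
  obtains k B1 where "n = Suc k" "B1 \<subseteq> past E B" "early_witness k x B1"
proof -
  obtain k B1 where n: "n = Suc k" and B1: "B1 \<subseteq> past E B" "witness_with E (conf_approx k) x B1"
    using confirmed_txs_witness[OF assms(2,3)] .
  have B: "B \<subseteq> msgs E" using assms(1) unfolding early_witness_def by simp
  have "past E B1 \<subseteq> past E B" using past_subset_past[OF B1(1)] .
  then have "confirmed_txs k (past E B1) \<subseteq> confirmed_txs n (past E B)"
    unfolding confirmed_txs_def n using conf_approx_mono_set conf_approx_mono[of k "Suc k"] by auto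
  then have "early_witness k x B1"
    using assms(1) B1 past_msgs[OF B] unfolding early_witness_def by blast
  with n B1(1) show ?thesis by (rule that)
qed

lemma early_witness_below:
  assumes "early_witness n c B" "early_witness m d B'"
    and "x \<in> confirmed_txs n (past E B) \<union> confirmed_txs m (past E B')" "x \<noteq> genesis E"
  shows "\<exists>k B1. k < max n m \<and> early_witness k x B1"
proof (cases "x \<in> confirmed_txs n (past E B)")
  case True
  from early_witness_of_confirmed[OF assms(1) True assms(4)] show ?thesis
    by (metis lessI less_max_iff_disj)
next
  case False
  with assms(3) have "x \<in> confirmed_txs m (past E B')" by simp
  from early_witness_of_confirmed[OF assms(2) this assms(4)] show ?thesis
    by (metis lessI less_max_iff_disj)
qed

lemma early_witnesses_share_honest_signer:
  fixes n m :: nat and B B' :: "'m set"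
  defines "T \<equiv> confirmed_txs n (past E B) \<union> confirmed_txs m (past E B')"
  assumes early: "early_witness n c B" "early_witness m d B'"
    and ledger: "valid_ledger T"
    and cross: "\<And>x. x \<in> confirmed_txs n (past E B) \<Longrightarrow> x \<noteq> genesis E \<Longrightarrow> x \<in> past E B'"
      "\<And>x. x \<in> confirmed_txs m (past E B') \<Longrightarrow> x \<noteq> genesis E \<Longrightarrow> x \<in> past E B"
  shows "\<exists>v. v \<in> signers E c B \<and> v \<in> signers E d B' \<and> honest E v"
proof (rule ccontr)
  assume no_honest: "\<not> ?thesis"
  have wit: "witness_with E (conf_approx n) c B" "witness_with E (conf_approx m) d B'"
    using early unfolding early_witness_def by auto
  have "finite (signers E c B)" "finite (signers E d B')"
    using wit unfolding witness_with_def signers_def by auto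
  then have "(\<Sum>v\<in>signers E c B. stake_with E (conf_approx n) (past E B) v)
       + (\<Sum>v\<in>signers E d B'. stake_with E (conf_approx m) (past E B') v)
     \<le> totalM E + genesis_adv E
       + (\<Sum>x | x \<in> T \<and> x \<noteq> genesis E \<and> \<not> honest E (txval E x). honest_input_value x)"
    using no_honest unfolding T_def by (intro stake_of_two_witness_sets_le ledger[unfolded T_def] cross) auto
  moreover have "genesis_adv E
      + (\<Sum>x | x \<in> T \<and> x \<noteq> genesis E \<and> \<not> honest E (txval E x). honest_input_value x) < totalM E / 3"
    using ledger early unfolding valid_ledger_def early_witness_def T_def
    by (intro adversarial_value_before_first_less) auto
  ultimately show False using wit unfolding witness_with_def by linarith
qed

lemma early_witnesses_consistent:
  "early_witness n c B \<Longrightarrow> early_witness m d B' \<Longrightarrow> c \<in> past E B' \<or> d \<in> past E B"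
proof (induction n m arbitrary: c B d B' rule: max_sum_induct)
  case (1 n m)
  let ?T = "confirmed_txs n (past E B) \<union> confirmed_txs m (past E B')"
  show ?case
  proof (cases "c \<in> past E B' \<or> d \<in> past E B")
    case True
    then show ?thesis .
  next
    case False
    have B: "B \<subseteq> msgs E" "B' \<subseteq> msgs E" using "1.prems" unfolding early_witness_def by auto
    have cross: "x \<in> past E B'" if x: "x \<in> confirmed_txs n (past E B)" "x \<noteq> genesis E" for x
    proof -
      obtain k B1 where k: "n = Suc k" "B1 \<subseteq> past E B" "early_witness k x B1"
        using early_witness_of_confirmed[OF "1.prems"(1) x] .
      then have "max k m < max n m \<or> max k m = max n m \<and> k + m < n + m" by auto
      then have "x \<in> past E B' \<or> d \<in> past E B1" using "1.IH" k(3) "1.prems"(2) by blast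
      with False past_subset_past[OF k(2)] show ?thesis by auto
    qed
    have cross': "x \<in> past E B" if x: "x \<in> confirmed_txs m (past E B')" "x \<noteq> genesis E" for x
    proof -
      obtain k B1 where k: "m = Suc k" "B1 \<subseteq> past E B'" "early_witness k x B1"
        using early_witness_of_confirmed[OF "1.prems"(2) x] .
      then have "max n k < max n m \<or> max n k = max n m \<and> n + k < n + m" by auto
      then have "c \<in> past E B1 \<or> x \<in> past E B" using "1.IH" k(3) "1.prems"(1) by blast
      with False past_subset_past[OF k(2)] show ?thesis by auto
    qed
    \<comment> \<open>Of two confirmed transactions one sees the other, and a witness set excludes visible conflicts.\<close>
    have "ins E x \<inter> ins E y = {}" if xy: "x \<in> ?T" "y \<in> ?T" "x \<noteq> y" for x y
    proof (cases "x = genesis E \<or> y = genesis E")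
      case False
      then obtain k1 k2 B1 B2 where "k1 < max n m" "early_witness k1 x B1" "k2 < max n m" "early_witness k2 y B2"
        using early_witness_below[OF "1.prems"] xy(1,2) by metis
      then have "x \<in> past E B2 \<or> y \<in> past E B1" using "1.IH"[of k1 k2] by (simp add: max_less_iff_conj)
      moreover have "is_tx E x" "is_tx E y" using xy(1,2) unfolding confirmed_txs_def by auto
      ultimately show ?thesis using witness_with_conflict_free xy(3)
        \<open>early_witness k1 x B1\<close> \<open>early_witness k2 y B2\<close> unfolding early_witness_def by blast
    qed (use genesis_ins in auto)
    then have "valid_ledger ?T" by (rule valid_ledger_confirmed[OF B])
    then obtain v where "v \<in> signers E c B" "v \<in> signers E d B'" "honest E v"
      using early_witnesses_share_honest_signer[OF "1.prems"] cross cross' by blast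
    then show ?thesis
      by (rule honest_signer_orders) (use B "1.prems" in \<open>auto simp: early_witness_def witness_with_def\<close>)
  qed
qed

lemma A0_early_witness: "\<exists>n. early_witness n t0 A0"
proof -
  obtain n where "witness_with E (conf_approx n) t0 A0"
    using witnessing_conf_approx[OF A0_witnessing] ..
  moreover have "\<forall>x\<in>confirmed_txs n (past E A0). tlt E x (tmax E A0)"
    using tx_in_past_A0_before unfolding confirmed_txs_def by auto
  ultimately show ?thesis using A0_msgs unfolding early_witness_def by blast
qed

lemma witness_avoiding_t0_in_past_A0:
  "B \<subseteq> msgs E \<Longrightarrow> witness_with E (conf_approx n) x B \<Longrightarrow> t0 \<notin> past E B \<Longrightarrow> x \<in> past E A0"
proof (induction n arbitrary: x B rule: less_induct)
  case (less n)
  have "tlt E y (tmax E A0)" if y: "y \<in> confirmed_txs n (past E B)" "y \<noteq> genesis E" for y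
  proof -
    obtain k B1 where k: "n = Suc k" "B1 \<subseteq> past E B" "witness_with E (conf_approx k) y B1"
      using confirmed_txs_witness[OF y] .
    have "t0 \<notin> past E B1" using less.prems(3) past_subset_past[OF k(2)] by blast
    then have "y \<in> past E A0" using less.IH k past_msgs[OF less.prems(1)] by blast
    with y show ?thesis using tx_in_past_A0_before unfolding confirmed_txs_def by blast
  qed
  then have "early_witness n x B" using less.prems(1,2) unfolding early_witness_def by blast
  with A0_early_witness less.prems(3) show ?case using early_witnesses_consistent by blast
qed

end

theorem lemma3:
  fixes E :: "('m, 'k) abc" and t0 :: 'm and A0 :: "'m set"
  assumes exec: "abc_execution E"
    and t0_tx: "t0 \<in> msgs E" "is_tx E t0" "t0 \<noteq> genesis E"
    and t0_conf: "conf E (msgs E) t0"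
    and A0: "A0 \<subseteq> msgs E" "witnessing E t0 A0"
    and first: "\<And>t A. t \<in> msgs E \<Longrightarrow> is_tx E t \<Longrightarrow> t \<noteq> genesis E \<Longrightarrow>
                  conf E (msgs E) t \<Longrightarrow> A \<subseteq> msgs E \<Longrightarrow> witnessing E t A \<Longrightarrow>
                  tle E (tmax E A0) (tmax E A)"
  shows "\<forall>t A. t \<in> msgs E \<and> is_tx E t \<and> conf E (msgs E) t \<and> A \<subseteq> msgs E \<and> witnessing E t A
           \<longrightarrow> t0 \<in> past E A \<or> t \<in> past E A0"
proof (intro allI impI)
  interpret first_confirmation E t0 A0
    using exec A0 first by unfold_locales
  fix t A
  assume "t \<in> msgs E \<and> is_tx E t \<and> conf E (msgs E) t \<and> A \<subseteq> msgs E \<and> witnessing E t A"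
  then have A: "A \<subseteq> msgs E" "witnessing E t A" by auto
  obtain n where "witness_with E (conf_approx n) t A"
    using witnessing_conf_approx[OF A(2)] ..
  then show "t0 \<in> past E A \<or> t \<in> past E A0"
    using witness_avoiding_t0_in_past_A0[OF A(1)] by blast
qed

end
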